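(* Fix reals $\mu>\nu>0$, reals $Q_\mu,Q_\nu,E_\mu,E_\nu$, and $Y_0\in[0,1]$. Let $S$ be the set of all configurations $(Y_i,e_i)_{i\ge 1}$ with $Y_i,e_i\in[0,1]$ for all $i\ge1$ which, together with the given $Y_0$ and $e_0=1/2$, satisfy the decoy-state constraints (DS). Define $$K=\frac{1}{\mu}e^{\mu}E_\mu Q_\mu-\frac{1}{\nu}e^{\nu}E_\nu Q_\nu+\frac{\mu-\nu}{2\mu\nu}Y_0,\qquad \beta_i=\frac{\mu^{i-1}-\nu^{i-1}}{i!}\ (i\ge3),$$ assume $0\le K<\sum_{i\ge 3}\beta_i$, and let $k_0$ be the smallest integer $\ge 3$ with $\sum_{i=k_0}^\infty\beta_i\le K$; assume $k_0\ge 4$. Define a configuration $(Y_i^\circ,e_i^\circ)_{i\ge1}$ by: $e_i^\circ=1$ for all $i\ge3$; $Y_i^\circ=0$ for $3\le i\le k_0-2$; $Y_{k_0-1}^\circ=\frac{(k_0-1)!}{\mu^{k_0-2}-\nu^{k_0-2}}\Big(K-\sum_{i=k_0}^\infty\beta_i\Big)$; $Y_i^\circ=1$ for $i\ge k_0$; $Y_1^\circ,Y_2^\circ$ are the unique solution of the two gain equations of (DS) (with the given $Y_0$ and these $Y_i^\circ$, $i\ge3$); $e_1^\circ Y_1^\circ$ is determined by the two error equations of (DS) (which then force $e_2^\circ Y_2^\circ=0$), and $e_2^\circ=0$. Assume $Y_1^\circ>0$, that this configuration lies in $S$, and that $0<e_1^\circ\le 1/2$. Then for every $(Y_i,e_i)_{i\ge1}\in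 S$, $$Y_1\big[1-h(e_1)\big]\ \ge\ Y_1^\circ\big[1-h(e_1^\circ)\big],$$ i.e. $(Y_i^\circ,e_i^\circ)$ minimizes $Y_1[1-h(e_1)]$ over $S$.
   Context: $h(x)=-x\log_2 x-(1-x)\log_2(1-x)$ is the binary entropy function on $[0,1]$ (with $0\log_2 0=0$). For reals $\mu>\nu>0$, the decoy-state constraints (DS) on sequences $(Y_i)_{i\ge0},(e_i)_{i\ge0}$ with values in $[0,1]$ are $$Q_\mu=\sum_{i=0}^\infty \frac{\mu^i e^{-\mu}}{i!}Y_i,\quad Q_\nu=\sum_{i=0}^\infty \frac{\nu^i e^{-\nu}}{i!}Y_i,\quad E_\mu Q_\mu=\sum_{i=0}^\infty \frac{\mu^i e^{-\mu}}{i!}Y_ie_i,\quad E_\nu Q_\nu=\sum_{i=0}^\infty \frac{\nu^i e^{-\nu}}{i!}Y_ie_i$$ (the first two are the "gain equations", the last two the "error equations"). *)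

theory Defs
  imports Complex_Main
begin

definition xlog2 :: "real \<Rightarrow> real" where
  "xlog2 x = (if x = 0 then 0 else x * log 2 x)"

definition bin_entropy :: "real \<Rightarrow> real" where
  "bin_entropy x = - xlog2 x - xlog2 (1 - x)"

definition poisson :: "real \<Rightarrow> nat \<Rightarrow> real" where
  "poisson m i = m ^ i * exp (- m) / fact i"

definition DS :: "real \<Rightarrow> real \<Rightarrow> real \<Rightarrow> real \<Rightarrow> real \<Rightarrow> real
                   \<Rightarrow> (nat \<Rightarrow> real) \<Rightarrow> (nat \<Rightarrow> real) \<Rightarrow> bool" where
  "DS \<mu> \<nu> Q\<mu> Q\<nu> E\<mu> E\<nu> Y e \<longleftrightarrow>
     Q\<mu> = (\<Sum>i. poisson \<mu> i * Y i) \<and>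
     Q\<nu> = (\<Sum>i. poisson \<nu> i * Y i) \<and>
     E\<mu> * Q\<mu> = (\<Sum>i. poisson \<mu> i * Y i * e i) \<and>
     E\<nu> * Q\<nu> = (\<Sum>i. poisson \<nu> i * Y i * e i)"

text \<open>The set S: configurations (Y_i,e_i)_{i>=1} in [0,1], represented as full
  sequences with Y 0 = Y0 and e 0 = 1/2, satisfying (DS).\<close>
definition configS :: "real \<Rightarrow> real \<Rightarrow> real \<Rightarrow> real \<Rightarrow> real \<Rightarrow> real \<Rightarrow> real
                        \<Rightarrow> ((nat \<Rightarrow> real) \<times> (nat \<Rightarrow> real)) set" where
  "configS \<mu> \<nu> Q\<mu> Q\<nu> E\<mu> E\<nu> Y0 =
     {(Y, e). Y 0 = Y0 \<and> e 0 = 1/2 \<and>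
              (\<forall>i\<ge>1. Y i \<in> {0..1} \<and> e i \<in> {0..1}) \<and>
              DS \<mu> \<nu> Q\<mu> Q\<nu> E\<mu> E\<nu> Y e}"

definition Kconst :: "real \<Rightarrow> real \<Rightarrow> real \<Rightarrow> real \<Rightarrow> real \<Rightarrow> real \<Rightarrow> real \<Rightarrow> real" where
  "Kconst \<mu> \<nu> Q\<mu> Q\<nu> E\<mu> E\<nu> Y0 =
     exp \<mu> * E\<mu> * Q\<mu> / \<mu> - exp \<nu> * E\<nu> * Q\<nu> / \<nu> + (\<mu> - \<nu>) / (2 * \<mu> * \<nu>) * Y0"

definition beta :: "real \<Rightarrow> real \<Rightarrow> nat \<Rightarrow> real" where
  "beta \<mu> \<nu> i = (\<mu> ^ (i - 1) - \<nu> ^ (i - 1)) / fact i"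

definition tail_beta :: "real \<Rightarrow> real \<Rightarrow> nat \<Rightarrow> real" where
  "tail_beta \<mu> \<nu> k = (\<Sum>j. beta \<mu> \<nu> (j + k))"

definition k0 :: "real \<Rightarrow> real \<Rightarrow> real \<Rightarrow> nat" where
  "k0 \<mu> \<nu> K = (LEAST k. 3 \<le> k \<and> tail_beta \<mu> \<nu> k \<le> K)"

definition Yhigh :: "real \<Rightarrow> real \<Rightarrow> real \<Rightarrow> nat \<Rightarrow> real" where
  "Yhigh \<mu> \<nu> K i =
     (let k = k0 \<mu> \<nu> K in
      if i \<le> k - 2 then 0
      else if i = k - 1 then fact (k - 1) / (\<mu> ^ (k - 2) - \<nu> ^ (k - 2)) * (K - tail_beta \<mu> \<nu> k)
      else 1)"

definition Yseq :: "real \<Rightarrow> real \<Rightarrow> real \<Rightarrow> (nat \<Rightarrow> real) \<Rightarrow> nat \<Rightarrow> real" where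
  "Yseq y0 y1 y2 T i = (if i = 0 then y0 else if i = 1 then y1 else if i = 2 then y2 else T i)"

definition Y12circ :: "real \<Rightarrow> real \<Rightarrow> real \<Rightarrow> real \<Rightarrow> real \<Rightarrow> real \<Rightarrow> real \<times> real" where
  "Y12circ \<mu> \<nu> Q\<mu> Q\<nu> Y0 K =
     (THE (y1, y2). Q\<mu> = (\<Sum>i. poisson \<mu> i * Yseq Y0 y1 y2 (Yhigh \<mu> \<nu> K) i) \<and>
                    Q\<nu> = (\<Sum>i. poisson \<nu> i * Yseq Y0 y1 y2 (Yhigh \<mu> \<nu> K) i))"

text \<open>(e_1^circ Y_1^circ, e_2^circ Y_2^circ): the unique solution of the two error equations,
  with Y_0 e_0 = Y0/2 and Y_i^circ e_i^circ = Y_i^circ for i >= 3.\<close>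
definition EY12circ :: "real \<Rightarrow> real \<Rightarrow> real \<Rightarrow> real \<Rightarrow> real \<Rightarrow> real \<Rightarrow> real \<Rightarrow> real \<Rightarrow> real \<times> real" where
  "EY12circ \<mu> \<nu> Q\<mu> Q\<nu> E\<mu> E\<nu> Y0 K =
     (THE (a1, a2). E\<mu> * Q\<mu> = (\<Sum>i. poisson \<mu> i * Yseq (Y0 / 2) a1 a2 (Yhigh \<mu> \<nu> K) i) \<and>
                    E\<nu> * Q\<nu> = (\<Sum>i. poisson \<nu> i * Yseq (Y0 / 2) a1 a2 (Yhigh \<mu> \<nu> K) i))"

definition Ycirc :: "real \<Rightarrow> real \<Rightarrow> real \<Rightarrow> real \<Rightarrow> real \<Rightarrow> real \<Rightarrow> real \<Rightarrow> nat \<Rightarrow> real" where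
  "Ycirc \<mu> \<nu> Q\<mu> Q\<nu> E\<mu> E\<nu> Y0 =
     (let K = Kconst \<mu> \<nu> Q\<mu> Q\<nu> E\<mu> E\<nu> Y0; p = Y12circ \<mu> \<nu> Q\<mu> Q\<nu> Y0 K in
      Yseq Y0 (fst p) (snd p) (Yhigh \<mu> \<nu> K))"

definition ecirc :: "real \<Rightarrow> real \<Rightarrow> real \<Rightarrow> real \<Rightarrow> real \<Rightarrow> real \<Rightarrow> real \<Rightarrow> nat \<Rightarrow> real" where
  "ecirc \<mu> \<nu> Q\<mu> Q\<nu> E\<mu> E\<nu> Y0 =
     (let K = Kconst \<mu> \<nu> Q\<mu> Q\<nu> E\<mu> E\<nu> Y0;
          y1 = fst (Y12circ \<mu> \<nu> Q\<mu> Q\<nu> Y0 K);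
          a1 = fst (EY12circ \<mu> \<nu> Q\<mu> Q\<nu> E\<mu> E\<nu> Y0 K) in
      Yseq (1/2) (a1 / y1) 0 (\<lambda>_. 1))"

end

theory Submission
  imports Defs
begin

text \<open>Since 1 - h is convex, Y_1 (1 - h(e_1)) is bounded below by p Y_1 - q Y_1 e_1, where
  p - q t is the tangent line of 1 - h at the circ value of e_1, with equality there. So it
  suffices that the circ configuration minimises this linear functional over S, which is a
  linear-programming duality argument: a suitable combination of the four (DS) equations, applied
  to the difference of two feasible configurations, gives a series summing to zero whose index-1
  term is a negative multiple of the difference of the functional and whose other terms are
  nonnegative. For i \<ge> 3 the sign comes from the log-concavity of n \<mapsto> \<mu>^n - \<nu>^n: the ratio
  (\<mu>^(n-1) - \<nu>^(n-1)) / (\<mu>^n - \<nu>^n) increases with n, matching the threshold shape of the circ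
  gains (0 below k_0 - 1, 1 from k_0 on).\<close>

lemma xlog2_ge_tangent:
  assumes "0 \<le> x" "0 < c"
  shows "x * log 2 c + (x - c) / ln 2 \<le> xlog2 x"
proof (cases "x = 0")
  case True
  then show ?thesis using assms by (simp add: xlog2_def)
next
  case False
  with assms have x: "0 < x" by simp
  have "ln c - ln x \<le> c / x - 1"
    using ln_le_minus_one[of "c / x"] x assms by (simp add: ln_div)
  then have "x * (ln c - ln x) \<le> x * (c / x - 1)"
    using x by (simp add: mult_left_mono)
  then have "x - c \<le> x * ln x - x * ln c"
    using x by (simp add: algebra_simps)
  then have "(x - c) / ln 2 \<le> (x * ln x - x * ln c) / ln 2"
    by (simp add: divide_right_mono)
  also have "\<dots> = xlog2 x - x * log 2 c"
    using False by (simp add: xlog2_def log_def diff_divide_distrib)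
  finally show ?thesis by simp
qed

lemma one_minus_bin_entropy_ge_tangent:
  assumes "0 < c" "c < 1" "0 \<le> x" "x \<le> 1"
  shows "1 + log 2 (1 - c) - (log 2 (1 - c) - log 2 c) * x \<le> 1 - bin_entropy x"
proof -
  have "x * log 2 c + (x - c) / ln 2 \<le> xlog2 x"
    using xlog2_ge_tangent assms by simp
  moreover have "(1 - x) * log 2 (1 - c) + (c - x) / ln 2 \<le> xlog2 (1 - x)"
    using xlog2_ge_tangent[of "1 - x" "1 - c"] assms by simp
  moreover have "(x - c) / ln 2 + (c - x) / ln 2 = 0"
    by (simp add: add_divide_distrib[symmetric])
  ultimately show ?thesis
    unfolding bin_entropy_def by (simp add: algebra_simps)
qed

lemma one_minus_bin_entropy_eq_tangent:
  assumes "0 < c" "c < 1"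
  shows "1 - bin_entropy c = 1 + log 2 (1 - c) - (log 2 (1 - c) - log 2 c) * c"
  using assms unfolding bin_entropy_def xlog2_def by (simp add: algebra_simps)

lemma log2_half_bounds:
  assumes "0 < x" "x \<le> 1/2"
  shows "0 \<le> 1 + log 2 (1 - x)" "0 \<le> - 1 - log 2 x"
proof -
  have "log 2 (1/2) = -1"
    by (simp add: log_divide)
  moreover have "log 2 (1/2) \<le> log 2 (1 - x)" "log 2 x \<le> log 2 (1/2)"
    using assms by simp_all
  ultimately show "0 \<le> 1 + log 2 (1 - x)" "0 \<le> - 1 - log 2 x"
    by linarith+
qed

text \<open>At n = 0 the denominator vanishes and the value is 0, which keeps the ratio monotone from 0 on.\<close>
definition power_diff_ratio :: "real \<Rightarrow> real \<Rightarrow> nat \<Rightarrow> real" where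
  "power_diff_ratio a b n = (a ^ (n - 1) - b ^ (n - 1)) / (a ^ n - b ^ n)"

lemma power_diff_log_concave:
  fixes a b :: real
  assumes "0 \<le> a * b"
  shows "(a ^ n - b ^ n) * (a ^ Suc (Suc n) - b ^ Suc (Suc n)) \<le> (a ^ Suc n - b ^ Suc n)\<^sup>2"
proof -
  have "(a ^ n - b ^ n) * (a ^ Suc (Suc n) - b ^ Suc (Suc n)) - (a ^ Suc n - b ^ Suc n)\<^sup>2
      = - ((a * b) ^ n * (a - b)\<^sup>2)"
    by (simp add: power2_eq_square algebra_simps)
  moreover have "0 \<le> (a * b) ^ n * (a - b)\<^sup>2"
    using assms by simp
  ultimately show ?thesis by linarith
qed

lemma power_diff_ratio_mono:
  assumes "0 < b" "b < a"
  shows "mono (power_diff_ratio a b)"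
  unfolding mono_iff_le_Suc
proof
  fix n
  show "power_diff_ratio a b n \<le> power_diff_ratio a b (Suc n)"
  proof (cases n)
    case 0
    then show ?thesis by (simp add: power_diff_ratio_def)
  next
    case (Suc k)
    have pos: "0 < a ^ Suc j - b ^ Suc j" for j
      using assms by (simp add: power_strict_mono del: power_Suc)
    have "(a ^ k - b ^ k) * (a ^ Suc (Suc k) - b ^ Suc (Suc k))
        \<le> (a ^ Suc k - b ^ Suc k) * (a ^ Suc k - b ^ Suc k)"
      using power_diff_log_concave[of a b k] assms by (simp add: power2_eq_square)
    then show ?thesis
      using Suc pos[of k] pos[of "Suc k"]
      by (simp add: power_diff_ratio_def divide_simps del: power_Suc)
  qed
qed

lemma power_diff_ratio_nonneg:
  assumes "0 < b" "b < a"
  shows "0 \<le> power_diff_ratio a b n"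
  using monoD[OF power_diff_ratio_mono[OF assms], of 0 n] by (simp add: power_diff_ratio_def)

lemma power_diff_ratio_mult:
  assumes "0 \<le> b" "b < a" "1 \<le> n"
  shows "power_diff_ratio a b n * (a ^ n - b ^ n) = a ^ (n - 1) - b ^ (n - 1)"
proof -
  have "b ^ n < a ^ n"
    using assms by (simp add: power_strict_mono)
  then show ?thesis by (simp add: power_diff_ratio_def)
qed

lemma summable_poisson_bounded:
  assumes "0 \<le> m" "\<And>i. \<bar>Z i\<bar> \<le> 1"
  shows "summable (\<lambda>i. poisson m i * Z i)"
proof (rule summable_comparison_test'[where N = 0])
  show "summable (\<lambda>i. exp (- m) * (inverse (fact i) * m ^ i))"
    by (rule summable_mult[OF summable_exp])
  fix n :: nat
  have "norm (poisson m n * Z n) = poisson m n * \<bar>Z n\<bar>"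
    using assms by (simp add: poisson_def abs_mult)
  also have "\<dots> \<le> poisson m n"
    using assms by (intro mult_right_le_one_le) (auto simp: poisson_def)
  finally show "norm (poisson m n * Z n) \<le> exp (- m) * (inverse (fact n) * m ^ n)"
    by (simp add: poisson_def field_simps)
qed

lemma poisson_diff_sums_zero:
  assumes "0 \<le> m" "\<And>i. \<bar>Z i\<bar> \<le> 1" "\<And>i. \<bar>Z' i\<bar> \<le> 1"
    and "(\<Sum>i. poisson m i * Z i) = (\<Sum>i. poisson m i * Z' i)"
  shows "(\<lambda>i. poisson m i * (Z i - Z' i)) sums 0"
proof -
  have "(\<lambda>i. poisson m i * Z i - poisson m i * Z' i)
      sums ((\<Sum>i. poisson m i * Z i) - (\<Sum>i. poisson m i * Z' i))"
    using assms(1-3) by (intro sums_diff summable_sums summable_poisson_bounded)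
  then show ?thesis
    using assms(4) by (simp add: right_diff_distrib)
qed

lemma poisson_combination_sums_zero:
  assumes "(\<lambda>i. poisson \<mu> i * Z i) sums 0" "(\<lambda>i. poisson \<nu> i * Z i) sums 0"
  shows "(\<lambda>i. (\<alpha> * \<mu> ^ i + \<beta> * \<nu> ^ i) * Z i / fact i) sums 0"
proof -
  have "(\<lambda>i. poisson \<mu> i * Z i * (\<alpha> * exp \<mu>) + poisson \<nu> i * Z i * (\<beta> * exp \<nu>)) sums (0 + 0)"
    using sums_add[OF sums_mult2[OF assms(1)] sums_mult2[OF assms(2)]] by simp
  moreover have "poisson \<mu> i * Z i * (\<alpha> * exp \<mu>) + poisson \<nu> i * Z i * (\<beta> * exp \<nu>)
      = (\<alpha> * \<mu> ^ i + \<beta> * \<nu> ^ i) * Z i / fact i" for i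
  proof -
    have exp_cancel: "poisson m i * exp m = m ^ i / fact i" for m
      by (simp add: poisson_def exp_minus)
    have "poisson \<mu> i * Z i * (\<alpha> * exp \<mu>) + poisson \<nu> i * Z i * (\<beta> * exp \<nu>)
       = \<alpha> * Z i * (poisson \<mu> i * exp \<mu>) + \<beta> * Z i * (poisson \<nu> i * exp \<nu>)"
      by (simp add: algebra_simps)
    also have "\<dots> = (\<alpha> * \<mu> ^ i + \<beta> * \<nu> ^ i) * Z i / fact i"
      unfolding exp_cancel by (simp add: algebra_simps add_divide_distrib)
    finally show ?thesis .
  qed
  ultimately show ?thesis by simp
qed

lemma sums_zero_nonpos_at:
  fixes f :: "nat \<Rightarrow> real"
  assumes "f sums 0" "\<And>i. i \<noteq> k \<Longrightarrow> 0 \<le> f i"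
  shows "f k \<le> 0"
proof -
  have rest: "(\<lambda>i. f i - (if i = k then f i else 0)) sums (0 - f k)"
    by (rule sums_diff[OF assms(1) sums_single])
  have "0 \<le> f i - (if i = k then f i else 0)" for i
    using assms(2)[of i] by auto
  then have "0 \<le> 0 - f k"
    using sums_le[OF _ sums_zero rest] by blast
  then show ?thesis by simp
qed

lemma tail_error_sign:
  assumes "0 < b" "b < a" "3 \<le> i" "y \<in> {0..1}" "e \<in> {0..1}"
    and "i \<le> m - 2 \<Longrightarrow> yc = 0" "m \<le> i \<Longrightarrow> yc = 1"
  shows "0 \<le> (power_diff_ratio a b (m - 2) - power_diff_ratio a b (i - 1)) * (y * e - yc)"
proof -
  consider "i \<le> m - 2" | "i = m - 1" | "m \<le> i" by linarith
  then show ?thesis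
  proof cases
    case 1
    then have "power_diff_ratio a b (i - 1) \<le> power_diff_ratio a b (m - 2)"
      using power_diff_ratio_mono[OF assms(1,2)] by (simp add: monoD)
    moreover have "0 \<le> y * e - yc"
      using 1 assms by simp
    ultimately show ?thesis by simp
  next
    case 2
    then have "i - 1 = m - 2" by simp
    then show ?thesis by simp
  next
    case 3
    then have "power_diff_ratio a b (m - 2) \<le> power_diff_ratio a b (i - 1)"
      using power_diff_ratio_mono[OF assms(1,2)] by (simp add: monoD)
    moreover have "y * e - yc \<le> 0"
      using 3 assms by (simp add: mult_le_one)
    ultimately show ?thesis by (simp add: mult_nonpos_nonpos)
  qed
qed

lemma certificate_term_nonneg:
  fixes \<mu> \<nu> p s y e yc :: real and i m :: nat
  defines "lam \<equiv> s * \<mu>\<^sup>2 * \<nu>\<^sup>2 * power_diff_ratio \<mu> \<nu> (m - 2)"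
  assumes "0 < \<nu>" "\<nu> < \<mu>" "0 \<le> p" "0 \<le> s" "3 \<le> i" "y \<in> {0..1}" "e \<in> {0..1}"
    and "i \<le> m - 2 \<Longrightarrow> yc = 0" "m \<le> i \<Longrightarrow> yc = 1"
  shows "0 \<le> (p * \<nu>\<^sup>2 * \<mu> ^ i - p * \<mu>\<^sup>2 * \<nu> ^ i) * (y - yc)
            + ((lam / \<mu> - (p + s) * \<nu>\<^sup>2) * \<mu> ^ i + ((p + s) * \<mu>\<^sup>2 - lam / \<nu>) * \<nu> ^ i) * (y * e - yc)"
proof -
  define A where "A n = \<mu> ^ n - \<nu> ^ n" for n
  define \<rho> where "\<rho> = power_diff_ratio \<mu> \<nu>"
  define j where "j = i - 2"
  have i: "i = Suc (Suc j)" and j: "1 \<le> j"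
    using assms(6) by (simp_all add: j_def)
  have A_pos: "0 < A n" if "1 \<le> n" for n
    using that assms(2,3) by (simp add: A_def power_strict_mono)
  have D_coeff: "p * \<nu>\<^sup>2 * \<mu> ^ i - p * \<mu>\<^sup>2 * \<nu> ^ i = \<mu>\<^sup>2 * \<nu>\<^sup>2 * (p * A j)"
    unfolding i A_def by (simp add: power2_eq_square algebra_simps)
  have "lam / \<mu> * \<mu> ^ i - lam / \<nu> * \<nu> ^ i = lam * A (Suc j)"
    using assms(2,3) unfolding i A_def by (simp add: algebra_simps)
  also have "\<dots> = \<mu>\<^sup>2 * \<nu>\<^sup>2 * (s * \<rho> (m - 2) * A (Suc j))"
    unfolding lam_def \<rho>_def by simp
  finally have E_coeff: "(lam / \<mu> - (p + s) * \<nu>\<^sup>2) * \<mu> ^ i + ((p + s) * \<mu>\<^sup>2 - lam / \<nu>) * \<nu> ^ i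
      = \<mu>\<^sup>2 * \<nu>\<^sup>2 * (s * \<rho> (m - 2) * A (Suc j) - (p + s) * A j)"
    unfolding i A_def by (simp add: power2_eq_square algebra_simps)
  have "A j = \<rho> (Suc j) * A (Suc j)"
    using power_diff_ratio_mult[of \<nu> \<mu> "Suc j"] assms(2,3) by (simp add: \<rho>_def A_def del: power_Suc)
  then have "(p * \<nu>\<^sup>2 * \<mu> ^ i - p * \<mu>\<^sup>2 * \<nu> ^ i) * (y - yc)
      + ((lam / \<mu> - (p + s) * \<nu>\<^sup>2) * \<mu> ^ i + ((p + s) * \<mu>\<^sup>2 - lam / \<nu>) * \<nu> ^ i) * (y * e - yc)
      = \<mu>\<^sup>2 * \<nu>\<^sup>2 * (p * A j * (y * (1 - e))
          + s * A (Suc j) * ((\<rho> (m - 2) - \<rho> (Suc j)) * (y * e - yc)))"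
    unfolding D_coeff E_coeff by (simp add: algebra_simps)
  moreover have "0 \<le> (\<rho> (m - 2) - \<rho> (Suc j)) * (y * e - yc)"
    using tail_error_sign[OF assms(2,3,6,7,8) assms(9,10)] by (simp add: \<rho>_def i)
  ultimately show ?thesis
    using assms(4,5,7,8) A_pos[of j] A_pos[of "Suc j"] j by simp
qed

lemma decoy_linear_bound:
  fixes \<mu> \<nu> p s :: real and m :: nat and Y e Y' e' :: "nat \<Rightarrow> real"
  assumes "0 < \<nu>" "\<nu> < \<mu>" "0 \<le> p" "0 \<le> s"
    and gains: "\<And>r. r \<in> {\<mu>, \<nu>} \<Longrightarrow> (\<lambda>i. poisson r i * (Y i - Y' i)) sums 0"
    and errors: "\<And>r. r \<in> {\<mu>, \<nu>} \<Longrightarrow> (\<lambda>i. poisson r i * (Y i * e i - Y' i * e' i)) sums 0"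
    and "Y 0 = Y' 0" "e 0 = e' 0" "0 \<le> Y 2 * e 2" "e' 2 = 0"
    and tail: "\<And>i. 3 \<le> i \<Longrightarrow> Y i \<in> {0..1} \<and> e i \<in> {0..1} \<and> e' i = 1"
    and "\<And>i. 3 \<le> i \<Longrightarrow> i \<le> m - 2 \<Longrightarrow> Y' i = 0"
    and "\<And>i. 3 \<le> i \<Longrightarrow> m \<le> i \<Longrightarrow> Y' i = 1"
  shows "p * Y' 1 - (p + s) * (Y' 1 * e' 1) \<le> p * Y 1 - (p + s) * (Y 1 * e 1)"
proof -
  define D where "D i = Y i - Y' i" for i
  define E where "E i = Y i * e i - Y' i * e' i" for i
  define lam where "lam = s * \<mu>\<^sup>2 * \<nu>\<^sup>2 * power_diff_ratio \<mu> \<nu> (m - 2)"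
  \<comment> \<open>Multipliers of the four (DS) equations: the index-1 term of T is
    \<mu> \<nu> (\<nu> - \<mu>) (p D 1 - (p + s) E 1), and lam makes the s-part of the coefficient of E i
    vanish at i = m - 1, where Y' may be fractional.\<close>
  define T where "T i = (p * \<nu>\<^sup>2 * \<mu> ^ i + (- p * \<mu>\<^sup>2) * \<nu> ^ i) * D i / fact i
      + ((lam / \<mu> - (p + s) * \<nu>\<^sup>2) * \<mu> ^ i + ((p + s) * \<mu>\<^sup>2 - lam / \<nu>) * \<nu> ^ i) * E i / fact i"
    for i
  have "T sums (0 + 0)"
    unfolding T_def D_def E_def
    by (intro sums_add poisson_combination_sums_zero gains errors) auto
  moreover have "0 \<le> T i" if "i \<noteq> 1" for i
  proof -
    consider "i = 0" | "i = 2" | "3 \<le> i"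
      using \<open>i \<noteq> 1\<close> by linarith
    then show ?thesis
    proof cases
      case 1
      then show ?thesis using assms(7,8) by (simp add: T_def D_def E_def)
    next
      case 2
      have "0 \<le> lam"
        using assms(1-4) power_diff_ratio_nonneg by (simp add: lam_def)
      then have "0 \<le> lam * (\<mu> - \<nu>) * E 2"
        using assms(2,9,10) by (simp add: E_def)
      then show ?thesis
        using assms(1,2) by (simp add: T_def 2 power2_eq_square field_simps)
    next
      case 3
      have "0 \<le> (p * \<nu>\<^sup>2 * \<mu> ^ i - p * \<mu>\<^sup>2 * \<nu> ^ i) * D i
          + ((lam / \<mu> - (p + s) * \<nu>\<^sup>2) * \<mu> ^ i + ((p + s) * \<mu>\<^sup>2 - lam / \<nu>) * \<nu> ^ i) * E i"
        using tail[OF 3] assms(12,13)[OF 3] unfolding D_def E_def lam_def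
        by (auto intro: certificate_term_nonneg[OF assms(1-4) 3])
      then show ?thesis
        by (simp add: T_def add_divide_distrib[symmetric])
    qed
  qed
  ultimately have "T 1 \<le> 0"
    using sums_zero_nonpos_at by simp
  moreover have "T 1 = \<mu> * \<nu> * (\<nu> - \<mu>) * (p * D 1 - (p + s) * E 1)"
    using assms(1,2) by (simp add: T_def power2_eq_square field_simps)
  moreover have "\<mu> * \<nu> * (\<nu> - \<mu>) < 0"
    using assms(1,2) by (simp add: mult_pos_neg)
  ultimately have "0 \<le> p * D 1 - (p + s) * E 1"
    by (simp add: mult_le_0_iff)
  then show ?thesis
    by (simp add: D_def E_def algebra_simps)
qed

lemma configS_bounded:
  assumes "(Y, e) \<in> configS \<mu> \<nu> Q\<mu> Q\<nu> E\<mu> E\<nu> Y0" "Y0 \<in> {0..1}"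
  shows "\<bar>Y i\<bar> \<le> 1" "\<bar>Y i * e i\<bar> \<le> 1"
proof -
  have "Y i \<in> {0..1} \<and> e i \<in> {0..1}"
    using assms unfolding configS_def by (cases "i = 0") auto
  then show "\<bar>Y i\<bar> \<le> 1" "\<bar>Y i * e i\<bar> \<le> 1"
    by (auto simp: abs_mult mult_le_one)
qed

lemma configS_diff_sums_zero:
  assumes "0 \<le> \<mu>" "0 \<le> \<nu>" "Y0 \<in> {0..1}" "r \<in> {\<mu>, \<nu>}"
    and S: "(Y, e) \<in> configS \<mu> \<nu> Q\<mu> Q\<nu> E\<mu> E\<nu> Y0"
    and S': "(Y', e') \<in> configS \<mu> \<nu> Q\<mu> Q\<nu> E\<mu> E\<nu> Y0"
  shows "(\<lambda>i. poisson r i * (Y i - Y' i)) sums 0"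
    and "(\<lambda>i. poisson r i * (Y i * e i - Y' i * e' i)) sums 0"
proof -
  have r: "0 \<le> r"
    using assms(1,2,4) by auto
  have "DS \<mu> \<nu> Q\<mu> Q\<nu> E\<mu> E\<nu> Y e" "DS \<mu> \<nu> Q\<mu> Q\<nu> E\<mu> E\<nu> Y' e'"
    using S S' unfolding configS_def by auto
  then have "(\<Sum>i. poisson r i * Y i) = (\<Sum>i. poisson r i * Y' i)"
    and "(\<Sum>i. poisson r i * (Y i * e i)) = (\<Sum>i. poisson r i * (Y' i * e' i))"
    using assms(4) unfolding DS_def by (auto simp: mult.assoc)
  then show "(\<lambda>i. poisson r i * (Y i - Y' i)) sums 0"
    and "(\<lambda>i. poisson r i * (Y i * e i - Y' i * e' i)) sums 0"
    using r configS_bounded[OF S assms(3)] configS_bounded[OF S' assms(3)]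
    by (simp_all add: poisson_diff_sums_zero)
qed

lemma ecirc_tail: "3 \<le> i \<Longrightarrow> ecirc \<mu> \<nu> Q\<mu> Q\<nu> E\<mu> E\<nu> Y0 i = 1"
  and ecirc_2: "ecirc \<mu> \<nu> Q\<mu> Q\<nu> E\<mu> E\<nu> Y0 2 = 0"
  by (simp_all add: ecirc_def Let_def Yseq_def)

lemma Ycirc_tail:
  fixes \<mu> \<nu> Q\<mu> Q\<nu> E\<mu> E\<nu> Y0 :: real
  defines "k \<equiv> k0 \<mu> \<nu> (Kconst \<mu> \<nu> Q\<mu> Q\<nu> E\<mu> E\<nu> Y0)"
  assumes "3 \<le> i"
  shows "i \<le> k - 2 \<Longrightarrow> Ycirc \<mu> \<nu> Q\<mu> Q\<nu> E\<mu> E\<nu> Y0 i = 0"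
    and "k \<le> i \<Longrightarrow> Ycirc \<mu> \<nu> Q\<mu> Q\<nu> E\<mu> E\<nu> Y0 i = 1"
  using assms by (auto simp: Ycirc_def Yhigh_def Yseq_def Let_def)

lemma circ_linear_bound:
  fixes \<mu> \<nu> Q\<mu> Q\<nu> E\<mu> E\<nu> Y0 p s :: real
  defines "Yc \<equiv> Ycirc \<mu> \<nu> Q\<mu> Q\<nu> E\<mu> E\<nu> Y0" and "ec \<equiv> ecirc \<mu> \<nu> Q\<mu> Q\<nu> E\<mu> E\<nu> Y0"
  assumes "0 < \<nu>" "\<nu> < \<mu>" "Y0 \<in> {0..1}" "0 \<le> p" "0 \<le> s"
    and circ: "(Yc, ec) \<in> configS \<mu> \<nu> Q\<mu> Q\<nu> E\<mu> E\<nu> Y0"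
    and S: "(Y, e) \<in> configS \<mu> \<nu> Q\<mu> Q\<nu> E\<mu> E\<nu> Y0"
  shows "p * Yc 1 - (p + s) * (Yc 1 * ec 1) \<le> p * Y 1 - (p + s) * (Y 1 * e 1)"
proof (rule decoy_linear_bound[OF assms(3,4,6,7)])
  show "(\<lambda>i. poisson r i * (Y i - Yc i)) sums 0"
    and "(\<lambda>i. poisson r i * (Y i * e i - Yc i * ec i)) sums 0" if "r \<in> {\<mu>, \<nu>}" for r
    using configS_diff_sums_zero[OF _ _ assms(5) that S circ] assms(3,4) by auto
  show "Y i \<in> {0..1} \<and> e i \<in> {0..1} \<and> ec i = 1" if "3 \<le> i" for i
    using S that unfolding configS_def ec_def by (simp add: ecirc_tail)
  show "Yc i = 0" if "3 \<le> i" "i \<le> k0 \<mu> \<nu> (Kconst \<mu> \<nu> Q\<mu> Q\<nu> E\<mu> E\<nu> Y0) - 2" for i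
    using that unfolding Yc_def by (rule Ycirc_tail)
  show "Yc i = 1" if "3 \<le> i" "k0 \<mu> \<nu> (Kconst \<mu> \<nu> Q\<mu> Q\<nu> E\<mu> E\<nu> Y0) \<le> i" for i
    using that unfolding Yc_def by (rule Ycirc_tail)
qed (use S circ in \<open>auto simp: configS_def ec_def ecirc_2\<close>)

theorem theorem1:
  fixes \<mu> \<nu> Q\<mu> Q\<nu> E\<mu> E\<nu> Y0 :: real
    and Y e :: "nat \<Rightarrow> real"
  assumes "\<mu> > \<nu>" and "\<nu> > 0"
    and "Y0 \<in> {0..1}"
    and "0 \<le> Kconst \<mu> \<nu> Q\<mu> Q\<nu> E\<mu> E\<nu> Y0"
    and "Kconst \<mu> \<nu> Q\<mu> Q\<nu> E\<mu> E\<nu> Y0 < tail_beta \<mu> \<nu> 3"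
    and "\<exists>k\<ge>3. tail_beta \<mu> \<nu> k \<le> Kconst \<mu> \<nu> Q\<mu> Q\<nu> E\<mu> E\<nu> Y0"
    and "k0 \<mu> \<nu> (Kconst \<mu> \<nu> Q\<mu> Q\<nu> E\<mu> E\<nu> Y0) \<ge> 4"
    and "Ycirc \<mu> \<nu> Q\<mu> Q\<nu> E\<mu> E\<nu> Y0 1 > 0"
    and "(Ycirc \<mu> \<nu> Q\<mu> Q\<nu> E\<mu> E\<nu> Y0, ecirc \<mu> \<nu> Q\<mu> Q\<nu> E\<mu> E\<nu> Y0) \<in> configS \<mu> \<nu> Q\<mu> Q\<nu> E\<mu> E\<nu> Y0"
    and "0 < ecirc \<mu> \<nu> Q\<mu> Q\<nu> E\<mu> E\<nu> Y0 1"
    and "ecirc \<mu> \<nu> Q\<mu> Q\<nu> E\<mu> E\<nu> Y0 1 \<le> 1/2"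
    and "(Y, e) \<in> configS \<mu> \<nu> Q\<mu> Q\<nu> E\<mu> E\<nu> Y0"
  shows "Y 1 * (1 - bin_entropy (e 1)) \<ge>
         Ycirc \<mu> \<nu> Q\<mu> Q\<nu> E\<mu> E\<nu> Y0 1 * (1 - bin_entropy (ecirc \<mu> \<nu> Q\<mu> Q\<nu> E\<mu> E\<nu> Y0 1))"
proof -
  \<comment> \<open>The hypotheses on K, k0 and Y1 only make the construction of the circ configuration
    meaningful; the argument needs just its feasibility and the range of e1.\<close>
  define x where "x = ecirc \<mu> \<nu> Q\<mu> Q\<nu> E\<mu> E\<nu> Y0 1"
  define p where "p = 1 + log 2 (1 - x)"
  define s where "s = - 1 - log 2 x"
  have x: "0 < x" "x \<le> 1/2"
    using assms(10,11) by (simp_all add: x_def)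
  have e1: "Y 1 \<in> {0..1}" "e 1 \<in> {0..1}"
    using assms(12) unfolding configS_def by auto
  have "1 - bin_entropy x = p - (p + s) * x"
    using one_minus_bin_entropy_eq_tangent[of x] x by (simp add: p_def s_def)
  then have "Ycirc \<mu> \<nu> Q\<mu> Q\<nu> E\<mu> E\<nu> Y0 1 * (1 - bin_entropy x)
      = p * Ycirc \<mu> \<nu> Q\<mu> Q\<nu> E\<mu> E\<nu> Y0 1 - (p + s) * (Ycirc \<mu> \<nu> Q\<mu> Q\<nu> E\<mu> E\<nu> Y0 1 * x)"
    by (simp add: right_diff_distrib)
  also have "\<dots> \<le> p * Y 1 - (p + s) * (Y 1 * e 1)"
    unfolding x_def using assms(1-3,9,12) log2_half_bounds[OF x]
    by (intro circ_linear_bound) (simp_all add: p_def s_def)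
  also have "\<dots> = Y 1 * (p - (p + s) * e 1)"
    by (simp add: algebra_simps)
  also have "\<dots> \<le> Y 1 * (1 - bin_entropy (e 1))"
    using one_minus_bin_entropy_ge_tangent[of x "e 1"] x e1
    by (intro mult_left_mono) (auto simp: p_def s_def)
  finally show ?thesis
    unfolding x_def .
qed

end
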